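(* Let $\Omega\subseteq\mathbb{R}^d$ be a convex body contained in the unit ball that contains a ball centered at $0$ of radius equal to a positive constant depending only on $d$, and let $f_0(x):=\|x\|^2$. There exists a positive constant $C_d$ depending only on $d$ such that for every integer $k\ge1$ there exist $m\le C_dk$ $d$-simplices $\Delta_1,\dots,\Delta_m\subseteq\Omega$ with disjoint interiors and a convex function $\tilde f_k$ on $\Omega$ such that: (1) $(1-C_dk^{-1/d})\Omega\subseteq\bigcup_{i=1}^m\Delta_i\subseteq\Omega$; (2) $\tilde f_k$ is affine on each $\Delta_i$; (3) $\sup_{x\in\Omega}|f_0(x)-\tilde f_k(x)|\le C_dk^{-2/d}$; (4) $\tilde f_k\in\mathcal{C}^{C_d}_{C_d}(\Omega)$.
   Context: $\mathcal{C}_L^L(\Omega)$ is the class of convex $L$-Lipschitz functions on $\Omega$ bounded in absolute value by $L$. For $\lambda>0$, $\lambda\Omega=\{\lambda x:x\in\Omega\}$. *)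

theory Defs
  imports "HOL-Analysis.Analysis"
begin

text \<open>The class C_L^L(Omega): convex, L-Lipschitz functions on Omega bounded in
  absolute value by L.\<close>
definition convex_lip_bdd :: "real \<Rightarrow> 'a::euclidean_space set \<Rightarrow> ('a \<Rightarrow> real) \<Rightarrow> bool" where
  "convex_lip_bdd L \<Omega> f \<longleftrightarrow>
     convex_on \<Omega> f \<and> L-lipschitz_on \<Omega> f \<and> (\<forall>x\<in>\<Omega>. \<bar>f x\<bar> \<le> L)"

definition convex_body :: "'a::euclidean_space set \<Rightarrow> bool" where
  "convex_body \<Omega> \<longleftrightarrow> compact \<Omega> \<and> convex \<Omega> \<and> interior \<Omega> \<noteq> {}"

end

theory Submission
  imports Defs "HOL-Combinatorics.Multiset_Permutations"
begin

(* Since \<parallel>x\<parallel>\<^sup>2 = \<Sum>\<^sub>b (x \<bullet> b)\<^sup>2, it is approximated by the sum over the coordinates of the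
  piecewise linear interpolant of t\<^sup>2 on the grid h\<int>, with h = k powr (-1/d). Each summand is
  convex, 5-Lipschitz on [-1,1] and exceeds t\<^sup>2 by at most h\<^sup>2/4, and the sum is affine on every
  cube of the grid h\<int>\<^sup>d. The Freudenthal-Kuhn triangulation cuts each cube into d! simplices;
  at most (2/h + 1)\<^sup>d grid cubes fit into \<Omega> \<subseteq> cball 0 1, giving O(k) simplices. Since \<Omega> is
  convex and contains ball 0 r, every point of (1 - \<delta>) \<Omega> has a ball of radius \<delta> r inside \<Omega>,
  so the grid cubes inside \<Omega> cover (1 - \<delta>) \<Omega> once \<delta> r exceeds their diameter d h. *)

section \<open>Interpolating the square on a one-dimensional grid\<close>

(* The secant of t\<^sup>2 through the grid points n h and (n + 1) h. *)
definition sq_chord :: "real \<Rightarrow> int \<Rightarrow> real \<Rightarrow> real" where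
  "sq_chord h n t = (2 * of_int n + 1) * h * t - of_int n * (of_int n + 1) * h\<^sup>2"

definition sq_interp :: "real \<Rightarrow> real \<Rightarrow> real" where
  "sq_interp h t = sq_chord h \<lfloor>t / h\<rfloor> t"

lemma grid_cell_bounds:
  fixes h t :: real
  assumes "h > 0"
  shows "of_int \<lfloor>t / h\<rfloor> * h \<le> t" "t \<le> (of_int \<lfloor>t / h\<rfloor> + 1) * h"
  using floor_divide_lower[OF assms, of t] floor_divide_upper[OF assms, of t] by auto

lemma sq_chord_diff:
  "sq_chord h n t - sq_chord h m t = (of_int n - of_int m) * h * (2 * t - h * (of_int n + of_int m + 1))"
  unfolding sq_chord_def by (simp add: algebra_simps power2_eq_square)

lemma sq_chord_le:
  assumes h: "h > 0" and t: "of_int n * h \<le> t" "t \<le> (of_int n + 1) * h"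
  shows "sq_chord h m t \<le> sq_chord h n t"
proof -
  have "0 \<le> (of_int n - of_int m) * h * (2 * t - h * (of_int n + of_int m + 1))"
  proof (cases m n rule: linorder_cases)
    case less
    then have "h * (of_int n + of_int m + 1) \<le> h * (2 * of_int n)"
      using h by (intro mult_left_mono) auto
    then show ?thesis
      using less h t(1) by (intro mult_nonneg_nonneg) (auto simp: algebra_simps)
  next
    case greater
    then have "h * (2 * (of_int n + 1)) \<le> h * (of_int n + of_int m + 1)"
      using h by (intro mult_left_mono) auto
    then show ?thesis
      using greater h t(2) by (intro mult_nonpos_nonpos) (auto simp: algebra_simps mult_nonpos_nonneg)
  qed simp
  then show ?thesis
    using sq_chord_diff[of h n t m] by linarith
qed

lemma sq_chord_le_sq_interp: "h > 0 \<Longrightarrow> sq_chord h m t \<le> sq_interp h t"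
  unfolding sq_interp_def using sq_chord_le grid_cell_bounds by blast

lemma sq_interp_eq_sq_chord:
  assumes "h > 0" "of_int n * h \<le> t" "t \<le> (of_int n + 1) * h"
  shows "sq_interp h t = sq_chord h n t"
  using sq_chord_le_sq_interp[OF assms(1), of n t] sq_chord_le[OF assms, of "\<lfloor>t / h\<rfloor>"]
  unfolding sq_interp_def by linarith

lemma sq_interp_error:
  assumes h: "h > 0"
  shows "0 \<le> sq_interp h t - t\<^sup>2" "sq_interp h t - t\<^sup>2 \<le> h\<^sup>2 / 4"
proof -
  define n where "n = real_of_int \<lfloor>t / h\<rfloor>"
  have n: "n * h \<le> t" "t \<le> (n + 1) * h"
    using grid_cell_bounds[OF h, of t] by (auto simp: n_def)
  have err: "sq_interp h t - t\<^sup>2 = (t - n * h) * ((n + 1) * h - t)"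
    unfolding sq_interp_def sq_chord_def n_def[symmetric] by (simp add: algebra_simps power2_eq_square)
  show "0 \<le> sq_interp h t - t\<^sup>2"
    unfolding err using n by simp
  have "0 \<le> ((t - n * h) - ((n + 1) * h - t))\<^sup>2"
    by simp
  then show "sq_interp h t - t\<^sup>2 \<le> h\<^sup>2 / 4"
    unfolding err by (simp add: algebra_simps power2_eq_square)
qed

lemma convex_on_sq_interp:
  assumes h: "h > 0"
  shows "convex_on UNIV (sq_interp h)"
proof (rule convex_onI)
  fix t x y :: real
  assume t: "0 < t" "t < 1"
  define n where "n = \<lfloor>((1 - t) * x + t * y) / h\<rfloor>"
  have "sq_interp h ((1 - t) * x + t * y) = sq_chord h n ((1 - t) * x + t * y)"
    unfolding sq_interp_def n_def ..
  also have "\<dots> = (1 - t) * sq_chord h n x + t * sq_chord h n y"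
    unfolding sq_chord_def by (simp add: algebra_simps)
  also have "\<dots> \<le> (1 - t) * sq_interp h x + t * sq_interp h y"
    using t sq_chord_le_sq_interp[OF h] by (intro add_mono mult_left_mono) auto
  finally show "sq_interp h ((1 - t) *\<^sub>R x + t *\<^sub>R y) \<le> (1 - t) * sq_interp h x + t * sq_interp h y"
    by simp
qed simp

lemma sq_interp_slope_bound:
  fixes h x :: real
  assumes h: "0 < h" "h \<le> 1" and x: "\<bar>x\<bar> \<le> 1"
  shows "\<bar>(2 * of_int \<lfloor>x / h\<rfloor> + 1) * h\<bar> \<le> 5"
proof -
  define n where "n = real_of_int \<lfloor>x / h\<rfloor>"
  have "n * h \<le> x" "x \<le> (n + 1) * h"
    using grid_cell_bounds[OF h(1), of x] by (auto simp: n_def)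
  then have "n * h \<le> 1" "-2 \<le> n * h"
    using x h by (auto simp: algebra_simps)
  moreover have "(2 * n + 1) * h = 2 * (n * h) + h"
    by (simp add: algebra_simps)
  ultimately show ?thesis
    unfolding n_def[symmetric] using h by (simp add: abs_le_iff)
qed

lemma sq_interp_lipschitz:
  assumes h: "0 < h" "h \<le> 1"
  shows "5-lipschitz_on {-1..1} (sq_interp h)"
proof -
  have one_sided: "sq_interp h x - sq_interp h y \<le> 5 * \<bar>x - y\<bar>" if x: "\<bar>x\<bar> \<le> 1" for x y
  proof -
    define n where "n = \<lfloor>x / h\<rfloor>"
    have "sq_interp h x - sq_interp h y \<le> sq_chord h n x - sq_chord h n y"
      using sq_chord_le_sq_interp[OF h(1), of n y] unfolding sq_interp_def n_def by simp
    also have "\<dots> = (2 * of_int n + 1) * h * (x - y)"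
      unfolding sq_chord_def by (simp add: algebra_simps)
    also have "\<dots> \<le> \<bar>(2 * of_int n + 1) * h\<bar> * \<bar>x - y\<bar>"
      by (metis abs_ge_self abs_mult)
    also have "\<dots> \<le> 5 * \<bar>x - y\<bar>"
      using sq_interp_slope_bound[OF h x] unfolding n_def by (intro mult_right_mono) auto
    finally show ?thesis .
  qed
  show ?thesis
  proof (rule lipschitz_onI)
    fix x y :: real
    assume "x \<in> {-1..1}" "y \<in> {-1..1}"
    then have "\<bar>x\<bar> \<le> 1" "\<bar>y\<bar> \<le> 1"
      by auto
    then show "dist (sq_interp h x) (sq_interp h y) \<le> 5 * dist x y"
      using one_sided[of x y] one_sided[of y x] by (simp add: dist_real_def abs_minus_commute)
  qed simp
qed

section \<open>Interpolating the squared norm on a cubical grid\<close>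

definition lattice_point :: "'a::euclidean_space \<Rightarrow> bool" where
  "lattice_point z \<longleftrightarrow> (\<forall>b\<in>Basis. z \<bullet> b \<in> \<int>)"

definition grid_cube :: "real \<Rightarrow> 'a::euclidean_space \<Rightarrow> 'a set" where
  "grid_cube h z = cbox (h *\<^sub>R z) (h *\<^sub>R (z + One))"

lemma mem_grid_cube:
  "x \<in> grid_cube h z \<longleftrightarrow> (\<forall>b\<in>Basis. h * (z \<bullet> b) \<le> x \<bullet> b \<and> x \<bullet> b \<le> h * (z \<bullet> b) + h)"
  unfolding grid_cube_def mem_box by (simp add: inner_add_left algebra_simps)

lemma lattice_point_inner_Basis:
  assumes "lattice_point z" "b \<in> Basis"
  shows "z \<bullet> b = of_int \<lfloor>z \<bullet> b\<rfloor>"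
  using assms unfolding lattice_point_def by (metis Ints_cases floor_of_int)

lemma grid_cube_cover:
  fixes x :: "'a::euclidean_space"
  assumes h: "h > 0"
  shows "\<exists>z. lattice_point z \<and> x \<in> grid_cube h z"
proof -
  define z :: 'a where "z = (\<Sum>b\<in>Basis. of_int \<lfloor>(x \<bullet> b) / h\<rfloor> *\<^sub>R b)"
  have "z \<bullet> b = of_int \<lfloor>(x \<bullet> b) / h\<rfloor>" if "b \<in> Basis" for b
    unfolding z_def using that by simp
  then have "lattice_point z" "x \<in> grid_cube h z"
    unfolding lattice_point_def mem_grid_cube using grid_cell_bounds[OF h] by (auto simp: algebra_simps)
  then show ?thesis
    by blast
qed

lemma grid_cube_diameter:
  fixes p q :: "'a::euclidean_space" and h :: real
  assumes "p \<in> grid_cube h z" "q \<in> grid_cube h z"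
  shows "norm (q - p) \<le> DIM('a) * h"
proof -
  have "norm (q - p) \<le> (\<Sum>b\<in>Basis. \<bar>(q - p) \<bullet> b\<bar>)"
    by (rule norm_le_l1)
  also have "\<dots> \<le> (\<Sum>b\<in>(Basis::'a set). h)"
    using assms unfolding mem_grid_cube by (intro sum_mono) (auto simp: inner_diff_left abs_le_iff dest!: bspec)
  finally show ?thesis
    by simp
qed

lemma interior_grid_cube:
  "interior (grid_cube h z) = {x. \<forall>b\<in>Basis. h * (z \<bullet> b) < x \<bullet> b \<and> x \<bullet> b < h * (z \<bullet> b) + h}"
  unfolding grid_cube_def interior_cbox by (auto simp: mem_box inner_add_left algebra_simps)

lemma grid_cube_interiors_disjoint:
  assumes h: "h > 0" and z: "lattice_point z" "lattice_point z'" "z \<noteq> z'"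
  shows "interior (grid_cube h z) \<inter> interior (grid_cube h z') = {}"
proof -
  obtain b where b: "b \<in> Basis" "z \<bullet> b \<noteq> z' \<bullet> b"
    using z(3) euclidean_eqI[of z z'] by blast
  define p where "p = \<lfloor>z \<bullet> b\<rfloor>"
  define q where "q = \<lfloor>z' \<bullet> b\<rfloor>"
  have pq: "z \<bullet> b = of_int p" "z' \<bullet> b = of_int q" "p \<noteq> q"
    using b lattice_point_inner_Basis[OF z(1) b(1)] lattice_point_inner_Basis[OF z(2) b(1)]
    unfolding p_def q_def by auto
  have separated: False if "h * of_int p < t" "t < h * of_int p + h" "h * of_int q < t" "t < h * of_int q + h" for t
  proof -
    have "h * of_int p < h * (of_int q + 1)" "h * of_int q < h * (of_int p + 1)"
      using that by (simp_all add: algebra_simps)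
    then have "real_of_int p < of_int q + 1" "real_of_int q < of_int p + 1"
      using h by (simp_all add: mult_less_cancel_left_pos)
    with \<open>p \<noteq> q\<close> show False
      by linarith
  qed
  show ?thesis
  proof (rule equals0I)
    fix x
    assume "x \<in> interior (grid_cube h z) \<inter> interior (grid_cube h z')"
    then have "h * of_int p < x \<bullet> b" "x \<bullet> b < h * of_int p + h"
      "h * of_int q < x \<bullet> b" "x \<bullet> b < h * of_int q + h"
      using b(1) pq by (auto simp: interior_grid_cube)
    then show False
      by (rule separated)
  qed
qed

definition norm_sq_interp :: "real \<Rightarrow> 'a::euclidean_space \<Rightarrow> real" where
  "norm_sq_interp h x = (\<Sum>b\<in>Basis. sq_interp h (x \<bullet> b))"

lemma norm_sq_interp_affine_on_grid_cube:
  fixes z :: "'a::euclidean_space"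
  assumes h: "h > 0" and z: "lattice_point z"
  shows "\<exists>v c. \<forall>x\<in>grid_cube h z. norm_sq_interp h x = v \<bullet> x + c"
proof -
  define n where "n = (\<lambda>b. \<lfloor>z \<bullet> b\<rfloor>)"
  define v where "v = (\<Sum>b\<in>Basis. ((2 * of_int (n b) + 1) * h) *\<^sub>R b)"
  define c where "c = - (\<Sum>b\<in>Basis. of_int (n b) * (of_int (n b) + 1) * h\<^sup>2)"
  have "norm_sq_interp h x = v \<bullet> x + c" if x: "x \<in> grid_cube h z" for x
  proof -
    have "sq_interp h (x \<bullet> b) = sq_chord h (n b) (x \<bullet> b)" if b: "b \<in> Basis" for b
      using x b lattice_point_inner_Basis[OF z b]
      by (intro sq_interp_eq_sq_chord[OF h]) (auto simp: mem_grid_cube n_def algebra_simps)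
    then have "norm_sq_interp h x = (\<Sum>b\<in>Basis. sq_chord h (n b) (x \<bullet> b))"
      unfolding norm_sq_interp_def by simp
    also have "\<dots> = (\<Sum>b\<in>Basis. ((2 * of_int (n b) + 1) * h) * (b \<bullet> x)) + c"
      unfolding sq_chord_def c_def by (simp add: sum_subtractf inner_commute)
    also have "\<dots> = v \<bullet> x + c"
      unfolding v_def by (simp add: inner_sum_left)
    finally show ?thesis .
  qed
  then show ?thesis
    by blast
qed

lemma convex_on_norm_sq_interp:
  assumes h: "h > 0"
  shows "convex_on UNIV (norm_sq_interp h :: 'a::euclidean_space \<Rightarrow> real)"
proof (rule convex_onI)
  fix t :: real and x y :: 'a
  assume t: "0 < t" "t < 1"
  have "norm_sq_interp h ((1 - t) *\<^sub>R x + t *\<^sub>R y) =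
        (\<Sum>b\<in>Basis. sq_interp h ((1 - t) *\<^sub>R (x \<bullet> b) + t *\<^sub>R (y \<bullet> b)))"
    unfolding norm_sq_interp_def by (simp add: inner_add_left)
  also have "\<dots> \<le> (\<Sum>b\<in>Basis. (1 - t) * sq_interp h (x \<bullet> b) + t * sq_interp h (y \<bullet> b))"
    using t by (intro sum_mono convex_onD[OF convex_on_sq_interp[OF h]]) auto
  also have "\<dots> = (1 - t) * norm_sq_interp h x + t * norm_sq_interp h y"
    unfolding norm_sq_interp_def by (simp add: sum.distrib sum_distrib_left)
  finally show "norm_sq_interp h ((1 - t) *\<^sub>R x + t *\<^sub>R y) \<le> (1 - t) * norm_sq_interp h x + t * norm_sq_interp h y" .
qed simp

lemma norm_sq_interp_error:
  fixes x :: "'a::euclidean_space"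
  assumes h: "h > 0"
  shows "0 \<le> norm_sq_interp h x - (norm x)\<^sup>2" "norm_sq_interp h x - (norm x)\<^sup>2 \<le> DIM('a) * (h\<^sup>2 / 4)"
proof -
  have "(norm x)\<^sup>2 = (\<Sum>b\<in>Basis. (x \<bullet> b)\<^sup>2)"
    unfolding power2_norm_eq_inner by (subst euclidean_inner) (simp add: power2_eq_square)
  then have err: "norm_sq_interp h x - (norm x)\<^sup>2 = (\<Sum>b\<in>Basis. sq_interp h (x \<bullet> b) - (x \<bullet> b)\<^sup>2)"
    unfolding norm_sq_interp_def by (simp add: sum_subtractf)
  show "0 \<le> norm_sq_interp h x - (norm x)\<^sup>2"
    unfolding err by (intro sum_nonneg) (use sq_interp_error[OF h] in auto)
  have "(\<Sum>b\<in>Basis. sq_interp h (x \<bullet> b) - (x \<bullet> b)\<^sup>2) \<le> (\<Sum>b\<in>(Basis::'a set). h\<^sup>2 / 4)"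
    by (intro sum_mono) (use sq_interp_error[OF h] in auto)
  then show "norm_sq_interp h x - (norm x)\<^sup>2 \<le> DIM('a) * (h\<^sup>2 / 4)"
    unfolding err by simp
qed

lemma norm_sq_interp_lipschitz:
  assumes h: "0 < h" "h \<le> 1"
  shows "(5 * DIM('a))-lipschitz_on (cball (0::'a::euclidean_space) 1) (norm_sq_interp h)"
proof (rule lipschitz_onI)
  fix x y :: 'a
  assume "x \<in> cball 0 1" "y \<in> cball 0 1"
  then have "\<bar>x \<bullet> b\<bar> \<le> 1" "\<bar>y \<bullet> b\<bar> \<le> 1" if "b \<in> Basis" for b
    using Basis_le_norm[OF that, of x] Basis_le_norm[OF that, of y] by auto
  then have coord: "\<bar>sq_interp h (x \<bullet> b) - sq_interp h (y \<bullet> b)\<bar> \<le> 5 * norm (x - y)" if b: "b \<in> Basis" for b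
    using lipschitz_onD[OF sq_interp_lipschitz[OF h], of "x \<bullet> b" "y \<bullet> b"] Basis_le_norm[OF b, of "x - y"] b
    by (fastforce simp: dist_real_def inner_diff_left)
  have "\<bar>norm_sq_interp h x - norm_sq_interp h y\<bar> \<le> (\<Sum>b\<in>Basis. \<bar>sq_interp h (x \<bullet> b) - sq_interp h (y \<bullet> b)\<bar>)"
    unfolding norm_sq_interp_def sum_subtractf[symmetric] by (rule sum_abs)
  also have "\<dots> \<le> (\<Sum>b\<in>(Basis::'a set). 5 * norm (x - y))"
    by (intro sum_mono coord)
  finally show "dist (norm_sq_interp h x) (norm_sq_interp h y) \<le> real (5 * DIM('a)) * dist x y"
    by (simp add: dist_real_def dist_norm)
qed simp

lemma norm_sq_interp_bound:
  fixes x :: "'a::euclidean_space"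
  assumes h: "0 < h" "h \<le> 1" and x: "norm x \<le> 1"
  shows "\<bar>norm_sq_interp h x\<bar> \<le> 1 + DIM('a)"
proof -
  have "(norm x)\<^sup>2 \<le> 1" "h\<^sup>2 \<le> 1"
    using x h by (simp_all add: abs_square_le_1)
  then have "real DIM('a) * (h\<^sup>2 / 4) \<le> real DIM('a)"
    by (simp add: mult_left_le)
  moreover have "0 \<le> (norm x)\<^sup>2"
    by simp
  ultimately show ?thesis
    using norm_sq_interp_error[OF h(1), of x] \<open>(norm x)\<^sup>2 \<le> 1\<close> unfolding abs_le_iff by linarith
qed

section \<open>The Freudenthal--Kuhn triangulation of a grid cube\<close>

(* For a permutation l of Basis, kuhn_simplex h z l is the part of grid_cube h z on which the
  coordinates relative to the corner h z decrease along l; its vertices are reached from h z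
  by steps of length h in the directions l ! 0, l ! 1, ... *)
definition kuhn_vertex :: "real \<Rightarrow> 'a::euclidean_space \<Rightarrow> 'a list \<Rightarrow> nat \<Rightarrow> 'a" where
  "kuhn_vertex h z l k = h *\<^sub>R (z + sum_list (take k l))"

definition kuhn_simplex :: "real \<Rightarrow> 'a::euclidean_space \<Rightarrow> 'a list \<Rightarrow> 'a set" where
  "kuhn_simplex h z l = convex hull (kuhn_vertex h z l ` {..length l})"

lemma length_permutation_of_Basis:
  "l \<in> permutations_of_set (Basis::'a::euclidean_space set) \<Longrightarrow> length l = DIM('a)"
  using distinct_card[of l] by (simp add: permutations_of_set_def)

lemma inner_sum_list_take_Basis:
  fixes l :: "'a::euclidean_space list"
  assumes "distinct l" "set l \<subseteq> Basis" "b \<in> Basis"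
  shows "sum_list (take k l) \<bullet> b = (if b \<in> set (take k l) then 1 else 0)"
proof -
  have "sum_list (take k l) \<bullet> b = (\<Sum>c\<in>set (take k l). c \<bullet> b)"
    using sum_list_distinct_conv_sum_set[of "take k l" id] assms(1) by (simp add: inner_sum_left)
  also have "\<dots> = (\<Sum>c\<in>set (take k l). if c = b then 1 else 0)"
    using assms(2,3) set_take_subset[of k l] by (intro sum.cong) (auto simp: inner_Basis)
  also have "\<dots> = (if b \<in> set (take k l) then 1 else 0)"
    by (simp add: sum.delta')
  finally show ?thesis .
qed

lemma distinct_nth_in_set_take_iff:
  assumes "distinct l" "j < length l"
  shows "l ! j \<in> set (take k l) \<longleftrightarrow> j < k"
  using assms by (auto simp: in_set_conv_nth nth_eq_iff_index_eq)

lemma kuhn_vertex_inner_Basis: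
  assumes "l \<in> permutations_of_set Basis" "b \<in> Basis"
  shows "kuhn_vertex h z l k \<bullet> b = h * (z \<bullet> b) + h * (if b \<in> set (take k l) then 1 else 0)"
  using inner_sum_list_take_Basis[of l b k] permutations_of_setD[OF assms(1)] assms(2)
  unfolding kuhn_vertex_def by (simp add: inner_add_left algebra_simps)

lemma kuhn_vertex_inner_nth:
  assumes "l \<in> permutations_of_set Basis" "j < length l"
  shows "kuhn_vertex h z l k \<bullet> (l ! j) = h * (z \<bullet> (l ! j)) + h * (if j < k then 1 else 0)"
proof -
  have "l ! j \<in> Basis" "distinct l"
    using nth_mem[OF assms(2)] permutations_of_setD[OF assms(1)] by auto
  then show ?thesis
    using kuhn_vertex_inner_Basis[OF assms(1)] distinct_nth_in_set_take_iff[OF _ assms(2)] by simp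
qed

lemma inj_on_kuhn_vertex:
  assumes l: "l \<in> permutations_of_set Basis" and h: "h > 0"
  shows "inj_on (kuhn_vertex h z l) {..length l}"
proof (rule linorder_inj_onI')
  fix k k'
  assume "k \<in> {..length l}" "k' \<in> {..length l}" "k < k'"
  then have "kuhn_vertex h z l k \<bullet> (l ! k) = h * (z \<bullet> (l ! k))"
    "kuhn_vertex h z l k' \<bullet> (l ! k) = h * (z \<bullet> (l ! k)) + h"
    using kuhn_vertex_inner_nth[OF l] by auto
  then show "kuhn_vertex h z l k \<noteq> kuhn_vertex h z l k'"
    using h by auto
qed

lemma kuhn_simplex_simplex:
  assumes l: "l \<in> permutations_of_set (Basis::'a::euclidean_space set)" and h: "h > 0"
  shows "int DIM('a) simplex kuhn_simplex h z l"
proof -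
  define V where "V = kuhn_vertex h z l ` {..length l}"
  define V0 where "V0 = (\<lambda>k. h *\<^sub>R sum_list (take k l)) ` {..length l}"
  have card_V: "card V = DIM('a) + 1"
    unfolding V_def using card_image[OF inj_on_kuhn_vertex[OF l h]] length_permutation_of_Basis[OF l] by simp
  have V_V0: "V = (+) (h *\<^sub>R z) ` V0"
    unfolding V_def V0_def kuhn_vertex_def by (auto simp: image_image scaleR_add_right)
  have "0 \<in> V0"
    unfolding V0_def by force
  then have affine_V0: "affine hull V0 = span V0"
    by (simp add: affine_hull_span_0 hull_inc)
  have "b \<in> span V0" if b: "b \<in> Basis" for b
  proof -
    have "b \<in> set l"
      using b permutations_of_setD(1)[OF l] by simp
    then obtain j where j: "j < length l" "l ! j = b"
      unfolding in_set_conv_nth by blast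
    have "h *\<^sub>R sum_list (take (Suc j) l) - h *\<^sub>R sum_list (take j l) \<in> span V0"
      unfolding V0_def using j by (intro span_diff span_base) auto
    then have "h *\<^sub>R b \<in> span V0"
      using j by (simp add: take_Suc_conv_app_nth algebra_simps)
    then have "(1 / h) *\<^sub>R (h *\<^sub>R b) \<in> span V0"
      by (rule span_mul)
    then show ?thesis
      using h by simp
  qed
  then have "span (Basis::'a set) \<subseteq> span V0"
    by (intro span_minimal) auto
  then have "aff_dim V0 = DIM('a)"
    using aff_dim_affine_hull[of V0] by (simp add: affine_V0 span_Basis top_unique)
  then have "aff_dim V = DIM('a)"
    unfolding V_V0 by (simp add: aff_dim_translation_eq)
  then have "\<not> affine_dependent V"
    using card_V by (simp add: affine_independent_iff_card V_def)
  then show ?thesis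
    unfolding simplex_def kuhn_simplex_def V_def[symmetric] using card_V by auto
qed

lemma kuhn_simplex_subset_grid_cube:
  assumes "l \<in> permutations_of_set Basis" "h \<ge> 0"
  shows "kuhn_simplex h z l \<subseteq> grid_cube h z"
  unfolding kuhn_simplex_def
proof (rule hull_minimal)
  show "kuhn_vertex h z l ` {..length l} \<subseteq> grid_cube h z"
    using kuhn_vertex_inner_Basis[OF assms(1)] assms(2) by (auto simp: mem_grid_cube)
qed (simp add: grid_cube_def convex_box)

lemma kuhn_simplex_ordered:
  assumes l: "l \<in> permutations_of_set Basis" and h: "h \<ge> 0" and ij: "i < j" "j < length l"
  shows "kuhn_simplex h z l \<subseteq> {x. (l ! j - l ! i) \<bullet> x \<le> (l ! j - l ! i) \<bullet> (h *\<^sub>R z)}"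
  unfolding kuhn_simplex_def
proof (rule hull_minimal)
  show "kuhn_vertex h z l ` {..length l} \<subseteq> {x. (l ! j - l ! i) \<bullet> x \<le> (l ! j - l ! i) \<bullet> (h *\<^sub>R z)}"
    using kuhn_vertex_inner_nth[OF l ij(2)] kuhn_vertex_inner_nth[OF l, of i] ij h
    by (auto simp: inner_diff_left inner_commute[of _ "l ! i"] inner_commute[of _ "l ! j"] right_diff_distrib)
qed (rule convex_halfspace_le)

lemma nth_after_first_difference:
  assumes "distinct l'" "length l = length l'" "\<forall>k<i. l ! k = l' ! k"
    and "i < length l" "l ! i \<noteq> l' ! i" "j < length l" "l ! j = l' ! i"
  shows "i < j"
proof (rule ccontr)
  assume "\<not> i < j"
  with assms(5,7) have "j < i"
    by (cases "j = i") auto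
  then have "l' ! j = l' ! i" "j < length l'" "i < length l'"
    using assms(2-4,6,7) by auto
  then show False
    using nth_eq_iff_index_eq[OF assms(1)] \<open>j < i\<close> by auto
qed

lemma distinct_lists_inversion:
  assumes "distinct l" "distinct l'" "set l = set l'" "l \<noteq> l'"
  shows "\<exists>i j i' j'. i < j \<and> j < length l \<and> j' < i' \<and> i' < length l' \<and> l' ! i' = l ! i \<and> l' ! j' = l ! j"
proof -
  have len: "length l = length l'"
    using assms distinct_card[of l] distinct_card[of l'] by simp
  then have "\<exists>i. i < length l \<and> l ! i \<noteq> l' ! i"
    using assms(4) nth_equalityI[of l l'] by auto
  define i where "i = (LEAST i. i < length l \<and> l ! i \<noteq> l' ! i)"
  have i: "i < length l" "l ! i \<noteq> l' ! i"
    using LeastI_ex[OF \<open>\<exists>i. _\<close>] unfolding i_def by auto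
  have prefix: "\<forall>k<i. l ! k = l' ! k"
    using not_less_Least i unfolding i_def by fastforce
  have "l' ! i \<in> set l"
    using nth_mem[of i l'] i(1) len assms(3) by simp
  then obtain j where j: "j < length l" "l ! j = l' ! i"
    by (auto simp: in_set_conv_nth)
  have "l ! i \<in> set l'"
    using nth_mem[OF i(1)] assms(3) by simp
  then obtain i' where i': "i' < length l'" "l' ! i' = l ! i"
    by (auto simp: in_set_conv_nth)
  have "i < j"
    using nth_after_first_difference[OF assms(2) len prefix i j] .
  moreover have "i < i'"
    using nth_after_first_difference[OF assms(1) len[symmetric], of i i'] prefix i i' len by auto
  ultimately show ?thesis
    using i j i' len by (intro exI[of _ i] exI[of _ j] exI[of _ i'] exI[of _ i]) auto
qed

lemma kuhn_simplex_interiors_disjoint_permutation: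
  assumes l: "l \<in> permutations_of_set Basis" and l': "l' \<in> permutations_of_set Basis"
    and h: "h \<ge> 0" and "l \<noteq> l'"
  shows "interior (kuhn_simplex h z l) \<inter> interior (kuhn_simplex h z l') = {}"
proof -
  obtain i j i' j' where ij: "i < j" "j < length l" "j' < i'" "i' < length l'"
    and same: "l' ! i' = l ! i" "l' ! j' = l ! j"
    using distinct_lists_inversion[of l l'] permutations_of_setD[OF l] permutations_of_setD[OF l'] \<open>l \<noteq> l'\<close>
    by auto
  define u where "u = l ! j - l ! i"
  have "u \<noteq> 0"
    using ij permutations_of_setD(2)[OF l] unfolding u_def by (simp add: nth_eq_iff_index_eq)
  have "interior (kuhn_simplex h z l) \<subseteq> interior {x. u \<bullet> x \<le> u \<bullet> (h *\<^sub>R z)}"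
    unfolding u_def by (intro interior_mono kuhn_simplex_ordered[OF l h ij(1,2)])
  also have "\<dots> = {x. u \<bullet> x < u \<bullet> (h *\<^sub>R z)}"
    using \<open>u \<noteq> 0\<close> by (rule interior_halfspace_le)
  finally have below: "interior (kuhn_simplex h z l) \<subseteq> {x. u \<bullet> x < u \<bullet> (h *\<^sub>R z)}" .
  have "interior (kuhn_simplex h z l') \<subseteq> interior {x. (- u) \<bullet> x \<le> (- u) \<bullet> (h *\<^sub>R z)}"
    using kuhn_simplex_ordered[OF l' h ij(3,4)] same unfolding u_def by (intro interior_mono) simp
  also have "\<dots> = {x. (- u) \<bullet> x < (- u) \<bullet> (h *\<^sub>R z)}"
    using \<open>u \<noteq> 0\<close> by (intro interior_halfspace_le) simp
  finally have above: "interior (kuhn_simplex h z l') \<subseteq> {x. (- u) \<bullet> x < (- u) \<bullet> (h *\<^sub>R z)}" .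
  show ?thesis
  proof (rule equals0I)
    fix x
    assume "x \<in> interior (kuhn_simplex h z l) \<inter> interior (kuhn_simplex h z l')"
    then have "u \<bullet> x < u \<bullet> (h *\<^sub>R z)" "(- u) \<bullet> x < (- u) \<bullet> (h *\<^sub>R z)"
      using below above by blast+
    then show False
      by simp
  qed
qed

lemma kuhn_simplex_interiors_disjoint:
  assumes h: "h > 0" and z: "lattice_point z" "lattice_point z'"
    and l: "l \<in> permutations_of_set Basis" "l' \<in> permutations_of_set Basis" and "(z, l) \<noteq> (z', l')"
  shows "interior (kuhn_simplex h z l) \<inter> interior (kuhn_simplex h z' l') = {}"
proof (cases "z = z'")
  case True
  then show ?thesis
    using kuhn_simplex_interiors_disjoint_permutation[OF l] h \<open>(z, l) \<noteq> (z', l')\<close> by simp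
next
  case False
  then have "interior (grid_cube h z) \<inter> interior (grid_cube h z') = {}"
    by (rule grid_cube_interiors_disjoint[OF h z])
  moreover have "interior (kuhn_simplex h z l) \<subseteq> interior (grid_cube h z)"
    "interior (kuhn_simplex h z' l') \<subseteq> interior (grid_cube h z')"
    using kuhn_simplex_subset_grid_cube[OF l(1)] kuhn_simplex_subset_grid_cube[OF l(2)] h
    by (simp_all add: interior_mono)
  ultimately show ?thesis
    by blast
qed

lemma sum_telescope_to_zero:
  fixes Y :: "nat \<Rightarrow> 'a::ab_group_add"
  assumes "Y (Suc d) = 0" "m \<le> Suc d"
  shows "(\<Sum>k = m..d. Y k - Y (Suc k)) = Y m"
proof -
  have "(\<Sum>k = m..d. Y k - Y (Suc k)) = - (\<Sum>k = m..d. Y (Suc k) - Y k)"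
    by (simp add: sum_negf[symmetric])
  also have "\<dots> = Y m"
    using sum_Suc_diff[OF assms(2), of Y] assms(1) by simp
  finally show ?thesis .
qed

lemma inner_sum_kuhn_vertex:
  assumes l: "l \<in> permutations_of_set Basis" and j: "j < length l"
  shows "(\<Sum>k\<le>length l. c k *\<^sub>R kuhn_vertex h z l k) \<bullet> (l ! j) =
           h * (z \<bullet> (l ! j)) * (\<Sum>k\<le>length l. c k) + h * (\<Sum>k = Suc j..length l. c k)"
proof -
  have "(\<Sum>k = Suc j..length l. c k) = (\<Sum>k\<in>{..length l} \<inter> {k. j < k}. c k)"
    by (rule sum.cong) auto
  also have "\<dots> = (\<Sum>k\<le>length l. if j < k then c k else 0)"
    by (simp add: sum.inter_restrict)
  finally have tail: "(\<Sum>k = Suc j..length l. c k) = (\<Sum>k\<le>length l. if j < k then c k else 0)" .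
  have "(\<Sum>k\<le>length l. c k *\<^sub>R kuhn_vertex h z l k) \<bullet> (l ! j) =
        (\<Sum>k\<le>length l. h * (z \<bullet> (l ! j)) * c k + h * (if j < k then c k else 0))"
    unfolding inner_sum_left using kuhn_vertex_inner_nth[OF l j] by (intro sum.cong) (auto simp: algebra_simps)
  then show ?thesis
    unfolding tail by (simp add: sum.distrib sum_distrib_left)
qed

(* The barycentric weights of x are the successive drops of its relative coordinates, sorted
  decreasingly along l and framed by 1 in front and 0 at the end. *)
lemma kuhn_simplex_memI:
  assumes l: "l \<in> permutations_of_set Basis" and h: "h > 0" and x: "x \<in> grid_cube h z"
    and ordered: "\<And>i j. i \<le> j \<Longrightarrow> j < length l \<Longrightarrow> (x - h *\<^sub>R z) \<bullet> (l ! j) \<le> (x - h *\<^sub>R z) \<bullet> (l ! i)"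
  shows "x \<in> kuhn_simplex h z l"
proof -
  define d where "d = length l"
  define y where "y k = (x - h *\<^sub>R z) \<bullet> (l ! k) / h" for k
  have y_bounds: "0 \<le> y k" "y k \<le> 1" if "k < d" for k
    using x nth_mem[of k l] permutations_of_setD(1)[OF l] that h
    by (auto simp: mem_grid_cube y_def d_def inner_diff_left field_simps)
  have y_antimono: "y j \<le> y i" if "i \<le> j" "j < d" for i j
    using ordered[OF that[unfolded d_def]] h unfolding y_def by (simp add: divide_right_mono)
  define Y where "Y k = (if k = 0 then 1 else if k \<le> d then y (k - 1) else 0)" for k
  define c where "c k = Y k - Y (Suc k)" for k
  have Y_tail: "(\<Sum>k = m..d. c k) = Y m" if "m \<le> Suc d" for m
    unfolding c_def using sum_telescope_to_zero[OF _ that, of Y] by (simp add: Y_def)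
  have c_sum: "(\<Sum>k\<le>d. c k) = 1"
    using Y_tail[of 0] by (simp add: atLeast0AtMost Y_def)
  have c_nonneg: "0 \<le> c k" if "k \<le> d" for k
    using that y_bounds[of 0] y_bounds[of "k - 1"] y_bounds[of k] y_antimono[of "k - 1" k]
    unfolding c_def Y_def by auto
  have "x = (\<Sum>k\<le>d. c k *\<^sub>R kuhn_vertex h z l k)"
  proof (rule euclidean_eqI)
    fix b :: 'a
    assume "b \<in> Basis"
    then have "b \<in> set l"
      using permutations_of_setD(1)[OF l] by simp
    then obtain j where j: "j < d" "l ! j = b"
      unfolding in_set_conv_nth d_def by blast
    have "(\<Sum>k\<le>d. c k *\<^sub>R kuhn_vertex h z l k) \<bullet> b = h * (z \<bullet> b) + h * y j"
      using inner_sum_kuhn_vertex[OF l, of j c h z] j c_sum Y_tail[of "Suc j"]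
      by (simp add: Y_def d_def)
    also have "\<dots> = x \<bullet> b"
      using h j unfolding y_def by (simp add: inner_diff_left)
    finally show "x \<bullet> b = (\<Sum>k\<le>d. c k *\<^sub>R kuhn_vertex h z l k) \<bullet> b" ..
  qed
  also have "\<dots> \<in> kuhn_simplex h z l"
    unfolding kuhn_simplex_def d_def
    by (rule convex_sum) (use c_sum c_nonneg d_def in \<open>auto intro: hull_inc\<close>)
  finally show ?thesis .
qed

lemma kuhn_simplices_cover_grid_cube:
  fixes x :: "'a::euclidean_space"
  assumes h: "h > 0" and x: "x \<in> grid_cube h z"
  shows "\<exists>l\<in>permutations_of_set Basis. x \<in> kuhn_simplex h z l"
proof -
  obtain L where L: "distinct L" "set L = (Basis::'a set)"
    using finite_distinct_list[of "Basis::'a set"] by auto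
  define key where "key b = - ((x - h *\<^sub>R z) \<bullet> b)" for b
  define l where "l = sort_key key L"
  have l: "l \<in> permutations_of_set Basis"
    unfolding l_def using L by auto
  have "sorted (map key l)"
    unfolding l_def by simp
  then have "(x - h *\<^sub>R z) \<bullet> (l ! j) \<le> (x - h *\<^sub>R z) \<bullet> (l ! i)" if "i \<le> j" "j < length l" for i j
    using sorted_nth_mono[of "map key l" i j] that by (simp add: key_def)
  then show ?thesis
    using kuhn_simplex_memI[OF l h x] l by blast
qed

section \<open>Triangulating the grid cubes inside a convex body\<close>

lemma card_grid_cubes_inside_unit_ball:
  fixes h :: real and \<Omega> :: "'a::euclidean_space set"
  assumes h: "h > 0" and n: "1 \<le> real n * h" and \<Omega>: "\<Omega> \<subseteq> cball 0 1"
  defines "Z \<equiv> {z. lattice_point z \<and> grid_cube h z \<subseteq> \<Omega>}"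
  shows "finite Z" "card Z \<le> (2 * n + 1) ^ DIM('a)"
proof -
  define G where "G = (Basis::'a set) \<rightarrow>\<^sub>E {- int n..int n}"
  define vec where "vec g = (\<Sum>b\<in>Basis. of_int (g b) *\<^sub>R b)" for g :: "'a \<Rightarrow> int"
  have "z \<in> vec ` G" if z: "z \<in> Z" for z
  proof -
    have "h *\<^sub>R z \<in> grid_cube h z"
      using h by (simp add: mem_grid_cube)
    then have "norm (h *\<^sub>R z) \<le> 1"
      using z \<Omega> unfolding Z_def by auto
    then have "h * norm z \<le> 1"
      using h by simp
    have "\<lfloor>z \<bullet> b\<rfloor> \<in> {- int n..int n}" if "b \<in> Basis" for b
    proof -
      have "h * \<bar>z \<bullet> b\<bar> \<le> h * norm z"
        using Basis_le_norm[OF that] h by (intro mult_left_mono) auto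
      also have "\<dots> \<le> h * real n"
        using \<open>h * norm z \<le> 1\<close> n by (simp add: mult.commute)
      finally have "\<bar>z \<bullet> b\<bar> \<le> real n"
        using h by simp
      then show ?thesis
        by (simp add: abs_le_iff le_floor_iff floor_le_iff)
    qed
    then have "restrict (\<lambda>b. \<lfloor>z \<bullet> b\<rfloor>) Basis \<in> G"
      unfolding G_def by auto
    moreover have "z = vec (restrict (\<lambda>b. \<lfloor>z \<bullet> b\<rfloor>) Basis)"
      unfolding vec_def using z lattice_point_inner_Basis[of z] unfolding Z_def
      by (subst euclidean_representation[symmetric, of z]) (auto intro!: sum.cong)
    ultimately show ?thesis
      by blast
  qed
  then have Z_sub: "Z \<subseteq> vec ` G"
    by blast
  have "finite G"
    unfolding G_def by (simp add: finite_PiE)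
  then show "finite Z"
    using Z_sub finite_subset by blast
  have "card Z \<le> card G"
    using card_mono[OF finite_imageI[OF \<open>finite G\<close>] Z_sub] card_image_le[OF \<open>finite G\<close>, of vec] by linarith
  also have "card G = (2 * n + 1) ^ DIM('a)"
    unfolding G_def by (simp add: card_PiE nat_add_distrib nat_mult_distrib)
  finally show "card Z \<le> (2 * n + 1) ^ DIM('a)" .
qed

lemma kuhn_triangulation:
  fixes \<Omega> :: "'a::euclidean_space set"
  assumes h: "h > 0" and n: "1 \<le> real n * h" and \<Omega>: "\<Omega> \<subseteq> cball 0 1"
  shows "\<exists>m \<Delta>. m \<le> (2 * n + 1) ^ DIM('a) * fact DIM('a) \<and>
    (\<forall>i\<in>{1..m}. int DIM('a) simplex \<Delta> i \<and>
                 (\<exists>z. lattice_point z \<and> grid_cube h z \<subseteq> \<Omega> \<and> \<Delta> i \<subseteq> grid_cube h z)) \<and>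
    (\<forall>i\<in>{1..m}. \<forall>j\<in>{1..m}. i \<noteq> j \<longrightarrow> interior (\<Delta> i) \<inter> interior (\<Delta> j) = {}) \<and>
    (\<forall>z. lattice_point z \<and> grid_cube h z \<subseteq> \<Omega> \<longrightarrow> grid_cube h z \<subseteq> (\<Union>i\<in>{1..m}. \<Delta> i))"
proof -
  define Z where "Z = {z::'a. lattice_point z \<and> grid_cube h z \<subseteq> \<Omega>}"
  define T where "T = Z \<times> permutations_of_set (Basis::'a set)"
  have T: "finite T" "card T \<le> (2 * n + 1) ^ DIM('a) * fact DIM('a)"
    using card_grid_cubes_inside_unit_ball[OF h n \<Omega>] unfolding T_def Z_def
    by (simp_all add: card_cartesian_product)
  obtain g where g: "bij_betw g {1..card T} T"
    using ex_bij_betw_nat_finite_1[OF T(1)] by blast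
  define \<Delta> where "\<Delta> i = kuhn_simplex h (fst (g i)) (snd (g i))" for i
  have gT: "fst (g i) \<in> Z" "snd (g i) \<in> permutations_of_set Basis" if "i \<in> {1..card T}" for i
    using bij_betwE[OF g] that unfolding T_def by (metis mem_Times_iff)+
  have simplices: "int DIM('a) simplex \<Delta> i \<and> (\<exists>z. lattice_point z \<and> grid_cube h z \<subseteq> \<Omega> \<and> \<Delta> i \<subseteq> grid_cube h z)"
    if "i \<in> {1..card T}" for i
    using kuhn_simplex_simplex[OF gT(2)[OF that] h] gT(1)[OF that]
      kuhn_simplex_subset_grid_cube[OF gT(2)[OF that], of h "fst (g i)"] h
    unfolding \<Delta>_def Z_def by auto
  have disjoint: "interior (\<Delta> i) \<inter> interior (\<Delta> j) = {}"
    if ij: "i \<in> {1..card T}" "j \<in> {1..card T}" "i \<noteq> j" for i j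
  proof -
    have "g i \<noteq> g j"
      using ij bij_betw_imp_inj_on[OF g] unfolding inj_on_def by blast
    then show ?thesis
      unfolding \<Delta>_def using gT[OF ij(1)] gT[OF ij(2)] h unfolding Z_def
      by (intro kuhn_simplex_interiors_disjoint) auto
  qed
  have cover: "grid_cube h z \<subseteq> (\<Union>i\<in>{1..card T}. \<Delta> i)" if "z \<in> Z" for z
  proof
    fix x
    assume "x \<in> grid_cube h z"
    then obtain l where l: "l \<in> permutations_of_set Basis" "x \<in> kuhn_simplex h z l"
      using kuhn_simplices_cover_grid_cube[OF h, of x z] by auto
    have "(z, l) \<in> g ` {1..card T}"
      using that l(1) bij_betw_imp_surj_on[OF g] unfolding T_def by simp
    then obtain i where "i \<in> {1..card T}" "g i = (z, l)"
      by (auto simp del: atLeastAtMost_iff)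
    then show "x \<in> (\<Union>i\<in>{1..card T}. \<Delta> i)"
      using l unfolding \<Delta>_def by force
  qed
  show ?thesis
  proof (intro exI[of _ "card T"] exI[of _ \<Delta>] conjI ballI allI impI)
    show "card T \<le> (2 * n + 1) ^ DIM('a) * fact DIM('a)"
      by (rule T(2))
  qed (use simplices disjoint cover in \<open>auto simp: Z_def\<close>)
qed

section \<open>Approximating the squared norm on a convex body\<close>

lemma convex_shrunk_ball_subset:
  fixes \<Omega> :: "'a::real_normed_vector set"
  assumes \<Omega>: "convex \<Omega>" "ball 0 r \<subseteq> \<Omega>" and y: "y \<in> \<Omega>" and \<delta>: "0 < \<delta>" "\<delta> \<le> 1"
  shows "ball ((1 - \<delta>) *\<^sub>R y) (\<delta> * r) \<subseteq> \<Omega>"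
proof
  fix q
  assume q: "q \<in> ball ((1 - \<delta>) *\<^sub>R y) (\<delta> * r)"
  define w where "w = (1 / \<delta>) *\<^sub>R (q - (1 - \<delta>) *\<^sub>R y)"
  have "norm w = norm (q - (1 - \<delta>) *\<^sub>R y) / \<delta>"
    unfolding w_def using \<delta> by simp
  also have "\<dots> < r"
    using q \<delta> by (simp add: dist_norm norm_minus_commute divide_less_eq mult.commute)
  finally have "w \<in> \<Omega>"
    using \<Omega>(2) by auto
  moreover have "q = (1 - \<delta>) *\<^sub>R y + \<delta> *\<^sub>R w"
    unfolding w_def using \<delta> by simp
  ultimately show "q \<in> \<Omega>"
    using convexD[OF \<Omega>(1) y, of w "1 - \<delta>" \<delta>] \<delta> by simp
qed

lemma shrunk_subset_grid_cubes:
  fixes \<Omega> :: "'a::euclidean_space set" and h r \<delta> :: real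
  assumes \<Omega>: "convex \<Omega>" "ball 0 r \<subseteq> \<Omega>" and h: "h > 0"
    and \<delta>: "0 < \<delta>" "\<delta> \<le> 1" "DIM('a) * h < \<delta> * r" and p: "p \<in> (\<lambda>x. (1 - \<delta>) *\<^sub>R x) ` \<Omega>"
  shows "\<exists>z. lattice_point z \<and> grid_cube h z \<subseteq> \<Omega> \<and> p \<in> grid_cube h z"
proof -
  obtain y where y: "y \<in> \<Omega>" "p = (1 - \<delta>) *\<^sub>R y"
    using p by blast
  obtain z where z: "lattice_point z" "p \<in> grid_cube h z"
    using grid_cube_cover[OF h] by blast
  have "grid_cube h z \<subseteq> ball p (\<delta> * r)"
  proof
    fix q
    assume "q \<in> grid_cube h z"
    then have "norm (q - p) < \<delta> * r"
      using grid_cube_diameter[OF z(2)] \<delta>(3) by fastforce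
    then show "q \<in> ball p (\<delta> * r)"
      by (simp add: dist_norm norm_minus_commute)
  qed
  also have "\<dots> \<subseteq> \<Omega>"
    using convex_shrunk_ball_subset[OF \<Omega> y(1) \<delta>(1,2)] y(2) by simp
  finally show ?thesis
    using z by blast
qed

lemma convex_lip_bdd_mono: "convex_lip_bdd L \<Omega> f \<Longrightarrow> L \<le> M \<Longrightarrow> convex_lip_bdd M \<Omega> f"
  unfolding convex_lip_bdd_def using lipschitz_on_mono by fastforce

lemma convex_lip_bdd_norm_sq_interp:
  fixes \<Omega> :: "'a::euclidean_space set"
  assumes \<Omega>: "convex \<Omega>" "\<Omega> \<subseteq> cball 0 1" and h: "0 < h" "h \<le> 1"
  shows "convex_lip_bdd (5 * real DIM('a) + 1) \<Omega> (norm_sq_interp h)"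
  unfolding convex_lip_bdd_def
proof (intro conjI ballI)
  show "convex_on \<Omega> (norm_sq_interp h)"
    using convex_on_subset[OF convex_on_norm_sq_interp[OF h(1)] subset_UNIV \<Omega>(1)] .
  show "(5 * real DIM('a) + 1)-lipschitz_on \<Omega> (norm_sq_interp h)"
    using lipschitz_on_mono[OF norm_sq_interp_lipschitz[OF h] \<Omega>(2)] by simp
  fix x
  assume "x \<in> \<Omega>"
  then show "\<bar>norm_sq_interp h x\<bar> \<le> 5 * real DIM('a) + 1"
    using norm_sq_interp_bound[OF h, of x] \<Omega>(2) by force
qed

lemma grid_approximation:
  fixes \<Omega> :: "'a::euclidean_space set" and h r :: real
  assumes \<Omega>: "convex \<Omega>" "\<Omega> \<subseteq> cball 0 1" "ball 0 r \<subseteq> \<Omega>"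
    and h: "0 < h" "h \<le> 1" and n: "1 \<le> real n * h"
  shows "\<exists>m \<Delta> f. m \<le> (2 * n + 1) ^ DIM('a) * fact DIM('a) \<and>
    (\<forall>i\<in>{1..m}. int DIM('a) simplex \<Delta> i \<and> \<Delta> i \<subseteq> \<Omega>) \<and>
    (\<forall>i\<in>{1..m}. \<forall>j\<in>{1..m}. i \<noteq> j \<longrightarrow> interior (\<Delta> i) \<inter> interior (\<Delta> j) = {}) \<and>
    (\<forall>\<delta>. 0 < \<delta> \<and> \<delta> \<le> 1 \<and> DIM('a) * h < \<delta> * r \<longrightarrow>
         (\<lambda>x. (1 - \<delta>) *\<^sub>R x) ` \<Omega> \<subseteq> (\<Union>i\<in>{1..m}. \<Delta> i)) \<and>
    (\<forall>i\<in>{1..m}. \<exists>v c. \<forall>x\<in>\<Delta> i. f x = v \<bullet> x + c) \<and>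
    (\<forall>x\<in>\<Omega>. \<bar>(norm x)\<^sup>2 - f x\<bar> \<le> DIM('a) * (h\<^sup>2 / 4)) \<and>
    convex_lip_bdd (5 * real DIM('a) + 1) \<Omega> f"
proof -
  obtain m \<Delta> where card: "m \<le> (2 * n + 1) ^ DIM('a) * fact DIM('a)"
    and simplices: "\<forall>i\<in>{1..m}. int DIM('a) simplex \<Delta> i \<and>
       (\<exists>z. lattice_point z \<and> grid_cube h z \<subseteq> \<Omega> \<and> \<Delta> i \<subseteq> grid_cube h z)"
    and disjoint: "\<forall>i\<in>{1..m}. \<forall>j\<in>{1..m}. i \<noteq> j \<longrightarrow> interior (\<Delta> i) \<inter> interior (\<Delta> j) = {}"
    and cover: "\<forall>z. lattice_point z \<and> grid_cube h z \<subseteq> \<Omega> \<longrightarrow> grid_cube h z \<subseteq> (\<Union>i\<in>{1..m}. \<Delta> i)"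
    using kuhn_triangulation[OF h(1) n \<Omega>(2)] by (elim exE conjE)
  have affine: "\<exists>v c. \<forall>x\<in>\<Delta> i. norm_sq_interp h x = v \<bullet> x + c" if "i \<in> {1..m}" for i
    using simplices that norm_sq_interp_affine_on_grid_cube[OF h(1)] by blast
  have error: "\<bar>(norm x)\<^sup>2 - norm_sq_interp h x\<bar> \<le> DIM('a) * (h\<^sup>2 / 4)" for x :: 'a
    using norm_sq_interp_error[OF h(1), of x] by (simp add: abs_le_iff)
  show ?thesis
  proof (intro exI[of _ m] exI[of _ \<Delta>] exI[of _ "norm_sq_interp h"] conjI ballI allI impI)
    fix i
    assume "i \<in> {1..m}"
    then obtain z where "int DIM('a) simplex \<Delta> i" "grid_cube h z \<subseteq> \<Omega>" "\<Delta> i \<subseteq> grid_cube h z"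
      using simplices by blast
    then show "int DIM('a) simplex \<Delta> i" "\<Delta> i \<subseteq> \<Omega>"
      by auto
  next
    fix \<delta> :: real
    assume "0 < \<delta> \<and> \<delta> \<le> 1 \<and> DIM('a) * h < \<delta> * r"
    then show "(\<lambda>x. (1 - \<delta>) *\<^sub>R x) ` \<Omega> \<subseteq> (\<Union>i\<in>{1..m}. \<Delta> i)"
      using shrunk_subset_grid_cubes[OF \<Omega>(1,3) h(1)] cover by blast
  qed (use card disjoint affine error convex_lip_bdd_norm_sq_interp[OF \<Omega>(1,2) h] in auto)
qed

lemma grid_size_bound:
  fixes D k :: nat
  assumes D: "D \<ge> 1" and k: "k \<ge> 1"
  defines "h \<equiv> real k powr (-1 / real D)"
  shows "0 < h" "h \<le> 1" "h\<^sup>2 = real k powr (-2 / real D)"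
    and "\<exists>n. 1 \<le> real n * h \<and> real ((2 * n + 1) ^ D) \<le> 5 ^ D * real k"
proof -
  define s where "s = real k powr (1 / real D)"
  have s: "1 \<le> s"
    using k by (simp add: s_def ge_one_powr_ge_zero)
  have h_s: "h = 1 / s"
    unfolding h_def s_def by (simp add: powr_minus_divide)
  show h_pos: "0 < h" and "h \<le> 1"
    using s h_s by auto
  show "h\<^sup>2 = real k powr (-2 / real D)"
    unfolding h_def by (simp add: power2_eq_square powr_add[symmetric])
  have "s ^ D = real k"
    using D k unfolding s_def by (simp add: powr_realpow[symmetric] powr_powr)
  define n where "n = nat \<lceil>s\<rceil>"
  have n: "s \<le> real n" "real n \<le> s + 1"
    unfolding n_def using s by linarith+
  show "\<exists>n. 1 \<le> real n * h \<and> real ((2 * n + 1) ^ D) \<le> 5 ^ D * real k"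
  proof (intro exI[of _ n] conjI)
    have "1 = s * h"
      using s h_s by simp
    also have "\<dots> \<le> real n * h"
      using n(1) h_pos by (intro mult_right_mono) auto
    finally show "1 \<le> real n * h" .
    have "real (2 * n + 1) ^ D \<le> (5 * s) ^ D"
      using n s by (intro power_mono) auto
    then show "real ((2 * n + 1) ^ D) \<le> 5 ^ D * real k"
      using \<open>s ^ D = real k\<close> by (simp add: power_mult_distrib)
  qed
qed

lemma approximation_for_constant:
  fixes \<Omega> :: "'a::euclidean_space set" and C r :: real
  assumes C: "5 ^ DIM('a) * fact DIM('a) \<le> C" "5 * real DIM('a) + 1 \<le> C" "real DIM('a) < C * r"
    and \<Omega>: "convex \<Omega>" "\<Omega> \<subseteq> cball 0 1" "ball 0 r \<subseteq> \<Omega>" and k: "1 \<le> k"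
  shows "\<exists>(m::nat) (\<Delta>::nat \<Rightarrow> 'a set) (f::'a \<Rightarrow> real).
       real m \<le> C * real k \<and>
       (\<forall>i\<in>{1..m}. int DIM('a) simplex \<Delta> i \<and> \<Delta> i \<subseteq> \<Omega>) \<and>
       (\<forall>i\<in>{1..m}. \<forall>j\<in>{1..m}. i \<noteq> j \<longrightarrow> interior (\<Delta> i) \<inter> interior (\<Delta> j) = {}) \<and>
       convex_on \<Omega> f \<and>
       (1 - C * real k powr (-1 / real DIM('a)) > 0 \<longrightarrow>
          (\<lambda>x. (1 - C * real k powr (-1 / real DIM('a))) *\<^sub>R x) ` \<Omega> \<subseteq> (\<Union>i\<in>{1..m}. \<Delta> i)) \<and>
       (\<Union>i\<in>{1..m}. \<Delta> i) \<subseteq> \<Omega> \<and>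
       (\<forall>i\<in>{1..m}. \<exists>(v::'a) (b::real). \<forall>x\<in>\<Delta> i. f x = v \<bullet> x + b) \<and>
       (\<forall>x\<in>\<Omega>. \<bar>(norm x)\<^sup>2 - f x\<bar> \<le> C * real k powr (-2 / real DIM('a))) \<and>
       convex_lip_bdd C \<Omega> f"
proof -
  define h where "h = real k powr (-1 / real DIM('a))"
  have "1 \<le> DIM('a)"
    using DIM_positive[where 'a='a] by linarith
  note h = grid_size_bound[OF this k, folded h_def]
  obtain n where n: "1 \<le> real n * h" "real ((2 * n + 1) ^ DIM('a)) \<le> 5 ^ DIM('a) * real k"
    using h(4) by blast
  obtain m \<Delta> f where card: "m \<le> (2 * n + 1) ^ DIM('a) * fact DIM('a)"
    and simplices: "\<forall>i\<in>{1..m}. int DIM('a) simplex \<Delta> i \<and> \<Delta> i \<subseteq> \<Omega>"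
    and disjoint: "\<forall>i\<in>{1..m}. \<forall>j\<in>{1..m}. i \<noteq> j \<longrightarrow> interior (\<Delta> i) \<inter> interior (\<Delta> j) = {}"
    and shrunk: "\<forall>\<delta>. 0 < \<delta> \<and> \<delta> \<le> 1 \<and> DIM('a) * h < \<delta> * r \<longrightarrow>
       (\<lambda>x. (1 - \<delta>) *\<^sub>R x) ` \<Omega> \<subseteq> (\<Union>i\<in>{1..m}. \<Delta> i)"
    and affine: "\<forall>i\<in>{1..m}. \<exists>v c. \<forall>x\<in>\<Delta> i. f x = v \<bullet> x + c"
    and error: "\<forall>x\<in>\<Omega>. \<bar>(norm x)\<^sup>2 - f x\<bar> \<le> DIM('a) * (h\<^sup>2 / 4)"
    and bounded: "convex_lip_bdd (5 * real DIM('a) + 1) \<Omega> f"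
    using grid_approximation[OF \<Omega> h(1,2) n(1)] by (elim exE conjE)
  have "real m \<le> real ((2 * n + 1) ^ DIM('a)) * fact DIM('a)"
    using card by (metis of_nat_fact of_nat_le_iff of_nat_mult)
  also have "\<dots> \<le> 5 ^ DIM('a) * fact DIM('a) * real k"
    using n(2) by (simp add: mult.commute mult.left_commute)
  also have "\<dots> \<le> C * real k"
    using C(1) by (intro mult_right_mono) auto
  finally have "real m \<le> C * real k" .
  moreover have "(\<lambda>x. (1 - C * h) *\<^sub>R x) ` \<Omega> \<subseteq> (\<Union>i\<in>{1..m}. \<Delta> i)" if "0 < 1 - C * h"
  proof (rule shrunk[rule_format])
    have "real DIM('a) * h < C * h * r"
      using mult_strict_right_mono[OF C(3) h(1)] by (simp add: mult_ac)
    then show "0 < C * h \<and> C * h \<le> 1 \<and> real DIM('a) * h < C * h * r"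
      using C(2) h(1) that by simp
  qed
  moreover have "\<bar>(norm x)\<^sup>2 - f x\<bar> \<le> C * h\<^sup>2" if "x \<in> \<Omega>" for x
  proof -
    have "real DIM('a) / 4 * h\<^sup>2 \<le> C * h\<^sup>2"
      using C(2) by (intro mult_right_mono) auto
    then show ?thesis
      using error that by force
  qed
  moreover have "convex_lip_bdd C \<Omega> f"
    using convex_lip_bdd_mono[OF bounded C(2)] .
  ultimately show ?thesis
    using simplices disjoint affine unfolding h_def[symmetric] h(3)[symmetric]
    by (intro exI[of _ m] exI[of _ \<Delta>] exI[of _ f]) (auto simp: convex_lip_bdd_def)
qed

theorem lemma8p3:
  fixes r :: real
  assumes "r > 0"
  shows "\<exists>C>0. \<forall>(\<Omega>::'a::euclidean_space set) (k::nat).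
    convex_body \<Omega> \<and> \<Omega> \<subseteq> cball 0 1 \<and> ball 0 r \<subseteq> \<Omega> \<and> k \<ge> 1 \<longrightarrow>
    (\<exists>(m::nat) (\<Delta>::nat \<Rightarrow> 'a set) (f::'a \<Rightarrow> real).
       real m \<le> C * real k \<and>
       (\<forall>i\<in>{1..m}. int DIM('a) simplex \<Delta> i \<and> \<Delta> i \<subseteq> \<Omega>) \<and>
       (\<forall>i\<in>{1..m}. \<forall>j\<in>{1..m}. i \<noteq> j \<longrightarrow> interior (\<Delta> i) \<inter> interior (\<Delta> j) = {}) \<and>
       convex_on \<Omega> f \<and>
       (1 - C * real k powr (-1 / real DIM('a)) > 0 \<longrightarrow>
          (\<lambda>x. (1 - C * real k powr (-1 / real DIM('a))) *\<^sub>R x) ` \<Omega> \<subseteq> (\<Union>i\<in>{1..m}. \<Delta> i)) \<and>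
       (\<Union>i\<in>{1..m}. \<Delta> i) \<subseteq> \<Omega> \<and>
       (\<forall>i\<in>{1..m}. \<exists>(v::'a) (b::real). \<forall>x\<in>\<Delta> i. f x = v \<bullet> x + b) \<and>
       (\<forall>x\<in>\<Omega>. \<bar>(norm x)\<^sup>2 - f x\<bar> \<le> C * real k powr (-2 / real DIM('a))) \<and>
       convex_lip_bdd C \<Omega> f)"
proof -
  define C where "C = 5 ^ DIM('a) * fact DIM('a) + 5 * real DIM('a) + 1 + real DIM('a) / r"
  have nonneg: "0 \<le> real DIM('a) / r" "(0::real) \<le> 5 ^ DIM('a) * fact DIM('a)"
    using assms by simp_all
  then have C: "5 ^ DIM('a) * fact DIM('a) \<le> C" "5 * real DIM('a) + 1 \<le> C"
    unfolding C_def by linarith+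
  have "C * r = (5 ^ DIM('a) * fact DIM('a) + 5 * real DIM('a) + 1) * r + real DIM('a)"
    unfolding C_def using assms by (simp add: field_simps)
  moreover have "0 < (5 ^ DIM('a) * fact DIM('a) + 5 * real DIM('a) + 1) * r"
    using assms nonneg(2) by (intro mult_pos_pos) linarith+
  ultimately have "real DIM('a) < C * r"
    by linarith
  show ?thesis
  proof (intro exI[of _ C] conjI allI impI, goal_cases)
    case 1
    show ?case
      using C(2) by linarith
  next
    case (2 \<Omega> k)
    then show ?case
      by (intro approximation_for_constant[OF C \<open>real DIM('a) < C * r\<close>]) (auto simp: convex_body_def)
  qed
qed

end
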